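(* Let $R$ be a positive random variable such that $e^R$ has infinite upper endpoint and lies in the Gumbel max-domain of attraction with scaling function $e$. Let $\lambda,\beta>0$, let $\gamma_u>0$ with $\gamma_u\to\gamma\in(0,\infty)$, and let $k>d$ be a constant. Then, as $u\to\infty$, $$\int_0^{1-\log(k)/\log u}\mathbb P\big(\lambda e^{R\theta\beta\gamma_u}>u/d\big)f(\theta)\,d\theta=o\!\left(\Big(\frac{e^*(u)}{u\log u}\Big)^{\frac{d-1}{2}}\mathbb P\big(\lambda e^{R\beta\gamma_u}>u\big)\right).$$
   Context: $d\ge2$ is an integer and $f(\theta)=\frac{\Gamma(d/2)}{\sqrt\pi\,\Gamma((d-1)/2)}(1-\theta^2)^{(d-3)/2}$, $\theta\in(-1,1)$. Gumbel max-domain of attraction with scaling function $e$ means $\lim_{t\to\infty}\mathbb P(e^R>t+xe(t))/\mathbb P(e^R>t)=e^{-x}$ for all real $x$. Define $e^*(u)=\beta\gamma_u\,u\,e(w(u))/w(u)$ with $w(u)=(u/\lambda)^{1/(\beta\gamma_u)}$. *)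

theory Defs
  imports "HOL-Probability.Probability" "HOL-Library.Landau_Symbols"
begin

text \<open>Density f of the first coordinate of a uniform point on the unit sphere in R^d.\<close>
definition sphere_density :: "nat \<Rightarrow> real \<Rightarrow> real" where
  "sphere_density d \<theta> =
     Gamma (real d / 2) / (sqrt pi * Gamma ((real d - 1) / 2)) * (1 - \<theta>\<^sup>2) powr ((real d - 3) / 2)"

definition wfun :: "real \<Rightarrow> real \<Rightarrow> (real \<Rightarrow> real) \<Rightarrow> real \<Rightarrow> real" where
  "wfun lam beta gam u = (u / lam) powr (1 / (beta * gam u))"

definition estar :: "real \<Rightarrow> real \<Rightarrow> (real \<Rightarrow> real) \<Rightarrow> (real \<Rightarrow> real) \<Rightarrow> real \<Rightarrow> real" where
  "estar lam beta gam e u = beta * gam u * u * e (wfun lam beta gam u) / wfun lam beta gam u"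

end

theory Submission
  imports Defs
begin

text \<open>
  Write G(t) = P(e^R > t), a_u = \<beta>\<gamma>_u, V_u = ln(u/(d\<lambda>))/a_u and t_u = 1 - ln k / ln u. The event in
  the integrand is e^R > exp(V_u/\<theta>), so the integrand is G(exp(V_u/\<theta>)) f(\<theta>) on (0, t_u).
  The Gumbel condition makes G rapidly varying: G(exp(s + y)) \<le> e^(\<kappa>(1 - y)) G(exp s) for every \<kappa> > 0
  and large s. As V_u/\<theta> \<ge> V_u/t_u + V_u (t_u - \<theta>) and V_u is of order ln u, the integral lives in a
  window of width 1/ln u below t_u, where f is of order (ln u)^(-(d-3)/2); so it is
  O((ln u)^(-(d-1)/2) G(exp(V_u/t_u))). Since k > d, V_u/t_u exceeds ln w(u) by a fixed \<eta> > 0, and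
  G(q t) = o((e(t)/t)^p G(t)) for all q > 1 and p > 0: along t \<mapsto> t + x e(t) the tail drops by a
  factor of about e^(-x) per step while the scale e at most doubles, so about log_2(t/e(t)) steps fit
  into [t, q t]. Finally (e*(u)/(u ln u))^((d-1)/2) = (a_u e(w(u))/(w(u) ln u))^((d-1)/2).
\<close>

section \<open>Integrals damped at the right endpoint\<close>

lemma interval_integral_le_exp_decay:
  fixes g :: "real \<Rightarrow> real"
  assumes tm: "0 < tm" and V: "V > 0" and A: "A \<ge> 0"
    and g: "\<And>x. x \<in> {0<..<tm} \<Longrightarrow> 0 \<le> g x \<and> g x \<le> A * exp (- V * (tm - x))"
  shows "\<bar>LBINT x=0..tm. g x\<bar> \<le> A / V"
proof -
  define h where "h x = A * exp (- V * (tm - x))" for x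
  define H where "H x = A / V * exp (- V * (tm - x))" for x
  have "(H has_real_derivative h x) (at x)" for x
    unfolding H_def h_def using V by (auto intro!: derivative_eq_intros simp: field_simps)
  then have h_int: "has_bochner_integral lborel (\<lambda>x. h x * indicator {0..tm} x) (H tm - H 0)"
    using tm by (intro has_bochner_integral_FTC_Icc_real) (auto simp: h_def)
  have "(LBINT x=0..tm. g x) = integral\<^sup>L lborel (\<lambda>x. indicator {0<..<tm} x *\<^sub>R g x)"
    using tm einterval_eq_Icc[of 0 tm]
    by (simp add: zero_ereal_def interval_lebesgue_integral_def set_lebesgue_integral_def)
  moreover have "0 \<le> integral\<^sup>L lborel (\<lambda>x. indicator {0<..<tm} x *\<^sub>R g x)"
    by (intro integral_nonneg_AE AE_I2) (auto simp: indicator_def g)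
  moreover have "integral\<^sup>L lborel (\<lambda>x. indicator {0<..<tm} x *\<^sub>R g x) \<le> A / V"
  proof (rule integral_real_bounded)
    show "0 \<le> A / V" using A V by simp
    have "(\<integral>\<^sup>+x. ennreal (indicator {0<..<tm} x *\<^sub>R g x) \<partial>lborel)
        \<le> (\<integral>\<^sup>+x. ennreal (h x * indicator {0..tm} x) \<partial>lborel)"
      by (intro nn_integral_mono ennreal_leI) (use A g in \<open>auto simp: indicator_def h_def\<close>)
    also have "\<dots> = ennreal (H tm - H 0)"
      using h_int A by (subst nn_integral_eq_integral) (auto simp: has_bochner_integral_iff h_def)
    also have "H tm - H 0 \<le> A / V" using A V by (simp add: H_def)
    finally show "(\<integral>\<^sup>+x. ennreal (indicator {0<..<tm} x *\<^sub>R g x) \<partial>lborel) \<le> ennreal (A / V)"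
      by (simp add: ennreal_leI)
  qed
  ultimately show ?thesis by simp
qed

lemma interval_integral_scaled_tail_le:
  fixes Q f :: "real \<Rightarrow> real"
  assumes tm: "0 < tm" "tm \<le> 1" and V: "V > 0" and B: "B \<ge> 0"
    and Q_antimono: "\<And>s t. s \<le> t \<Longrightarrow> Q t \<le> Q s"
    and Q_decay: "\<And>y. y \<ge> 0 \<Longrightarrow> 0 \<le> Q (V / tm + y) \<and> Q (V / tm + y) \<le> D * exp (- \<kappa> * y)"
    and f_bound: "\<And>x. x \<in> {0<..<tm} \<Longrightarrow> 0 \<le> f x \<and> f x \<le> B * exp ((\<kappa> - 1) * (V * (tm - x)))"
  shows "\<bar>LBINT x=0..tm. Q (V / x) * f x\<bar> \<le> B * D / V"
proof (rule interval_integral_le_exp_decay[OF tm(1) V])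
  have "D \<ge> 0" using Q_decay[of 0] by simp
  then show "0 \<le> B * D" using B by simp
  fix x assume x: "x \<in> {0<..<tm}"
  define z where "z = V * (tm - x)"
  have "V * (tm - x) * (x * tm) \<le> V * (tm - x)"
    using x tm V by (intro mult_left_le) (auto intro: mult_le_one)
  then have "z \<le> V / x - V / tm" using x tm by (simp add: z_def field_simps)
  moreover have "z \<ge> 0" using x V by (simp add: z_def)
  ultimately have Q: "0 \<le> Q (V / x) \<and> Q (V / x) \<le> D * exp (- \<kappa> * z)"
    using Q_decay[of z] Q_decay[of "V / x - V / tm"] Q_antimono[of "V / tm + z" "V / x"] by auto
  then have "Q (V / x) * f x \<le> D * exp (- \<kappa> * z) * (B * exp ((\<kappa> - 1) * z))"
    using f_bound[OF x] by (intro mult_mono) (auto simp: z_def)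
  also have "\<dots> = B * D * exp (- V * (tm - x))"
    by (simp add: z_def algebra_simps flip: exp_add)
  finally show "0 \<le> Q (V / x) * f x \<and> Q (V / x) * f x \<le> B * D * exp (- V * (tm - x))"
    using Q f_bound[OF x] by simp
qed

lemma sphere_density_nonneg: "d \<ge> 2 \<Longrightarrow> 0 \<le> sphere_density d \<theta>"
  by (simp add: sphere_density_def)

lemma sphere_density_le_powr:
  assumes "d \<ge> 2" "0 \<le> \<theta>" "\<theta> < 1"
  shows "sphere_density d \<theta>
    \<le> 2 powr max 0 ((real d - 3) / 2) * sphere_density d 0 * (1 - \<theta>) powr ((real d - 3) / 2)"
proof -
  define r where "r = (real d - 3) / 2"
  have "(1 - \<theta>\<^sup>2) powr r \<le> 2 powr max 0 r * (1 - \<theta>) powr r"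
  proof (cases "r < 0")
    case True
    have "1 - \<theta> \<le> 1 - \<theta>\<^sup>2" using assms by (simp add: power2_eq_square mult_left_le_one_le)
    then show ?thesis using True assms by (simp add: powr_mono2')
  next
    case False
    have "1 - \<theta>\<^sup>2 = 2 * (1 - \<theta>) - (1 - \<theta>)\<^sup>2" by (simp add: power2_eq_square algebra_simps)
    then have "1 - \<theta>\<^sup>2 \<le> 2 * (1 - \<theta>)" by simp
    then have "(1 - \<theta>\<^sup>2) powr r \<le> (2 * (1 - \<theta>)) powr r"
      using False assms power_le_one[of \<theta> 2] by (intro powr_mono2) auto
    also have "(2 * (1 - \<theta>)) powr r = 2 powr max 0 r * (1 - \<theta>) powr r"
    proof -
      have "max 0 r = r" using False by simp
      then show ?thesis by (simp only: powr_mult)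
    qed
    finally show ?thesis .
  qed
  moreover have "Gamma (real d / 2) / (sqrt pi * Gamma ((real d - 1) / 2)) \<ge> 0" using assms by simp
  ultimately show ?thesis
    by (auto simp: sphere_density_def r_def mult_ac dest: mult_left_mono)
qed

lemma powr_le_exp_scaled:
  fixes c b l y z r :: real
  assumes "c > 0" "b \<ge> 0" "l > 0" "z \<ge> 0" "c / l \<le> y" "y \<le> (c + b * z) / l"
  shows "y powr r \<le> (c powr r + (c + b) powr r) * l powr (- r) * exp (max 0 r * z)"
proof (cases "r < 0")
  case True
  then have "y powr r \<le> (c / l) powr r" using assms by (intro powr_mono2') auto
  also have "\<dots> = c powr r * l powr (- r)" by (simp add: powr_divide powr_minus_divide)
  also have "\<dots> \<le> (c powr r + (c + b) powr r) * l powr (- r)" by (intro mult_right_mono) auto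
  finally show ?thesis using True by simp
next
  case False
  have "c + b * z \<le> (c + b) * exp z"
  proof -
    have "c + b * z \<le> (c + b) * (1 + z)" using assms by (simp add: algebra_simps)
    also have "\<dots> \<le> (c + b) * exp z" using assms by (intro mult_left_mono exp_ge_add_one_self) auto
    finally show ?thesis .
  qed
  then have "y \<le> (c + b) * exp z / l"
    by (rule order.trans[OF assms(6) divide_right_mono]) (use assms in auto)
  then have "y powr r \<le> ((c + b) * exp z / l) powr r"
    using False assms by (intro powr_mono2) (auto intro: order.trans[OF _ \<open>c / l \<le> y\<close>])
  also have "\<dots> = (c + b) powr r * l powr (- r) * exp (r * z)"
  proof -
    have "exp z powr r = exp (r * z)" by (simp add: powr_def)
    then show ?thesis by (simp add: powr_divide powr_mult powr_minus_divide)
  qed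
  also have "\<dots> \<le> (c powr r + (c + b) powr r) * l powr (- r) * exp (max 0 r * z)"
    using False by (intro mult_mono) auto
  finally show ?thesis .
qed

lemma sphere_density_cap_bound:
  assumes "d \<ge> 2" "lk > 0" "b > 0"
  obtains C where "C > 0"
    and "\<And>l V x. l > 0 \<Longrightarrow> l \<le> b * V \<Longrightarrow> 0 < x \<Longrightarrow> x < 1 - lk / l \<Longrightarrow>
      sphere_density d x
        \<le> C * l powr (- ((real d - 3) / 2)) * exp (max 0 ((real d - 3) / 2) * (V * (1 - lk / l - x)))"
proof
  define r where "r = (real d - 3) / 2"
  define C where "C = 2 powr max 0 r * sphere_density d 0 * (lk powr r + (lk + b) powr r)"
  have "sphere_density d 0 > 0" using assms(1) by (simp add: sphere_density_def)
  then show "C > 0" using assms by (simp add: C_def add_pos_pos)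
  fix l V x assume l: "l > 0" "l \<le> b * V" and x: "0 < x" "x < 1 - lk / l"
  have "1 - x \<le> (lk + b * (V * (1 - lk / l - x))) / l"
  proof -
    define w where "w = 1 - lk / l - x"
    have "l * w \<le> b * V * w" using l x by (intro mult_right_mono) (auto simp: w_def)
    then have "w \<le> b * (V * w) / l" using l by (simp add: field_simps)
    then show ?thesis unfolding add_divide_distrib w_def[symmetric] by (simp add: w_def)
  qed
  moreover have "V > 0" using l assms by (smt (verit) mult_nonneg_nonpos)
  ultimately have "(1 - x) powr r
      \<le> (lk powr r + (lk + b) powr r) * l powr (- r) * exp (max 0 r * (V * (1 - lk / l - x)))"
    using assms l x by (intro powr_le_exp_scaled) auto
  moreover have "x < 1" using x l assms by (smt (verit) divide_pos_pos)
  then have "sphere_density d x \<le> 2 powr max 0 r * sphere_density d 0 * (1 - x) powr r"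
    using sphere_density_le_powr[OF assms(1)] x by (simp add: r_def)
  ultimately show "sphere_density d x \<le> C * l powr (- r) * exp (max 0 r * (V * (1 - lk / l - x)))"
    using sphere_density_nonneg[OF assms(1), of 0] unfolding C_def
    by (smt (verit, best) mult.assoc mult_left_mono powr_ge_zero)
qed

lemma sphere_cap_integral_le:
  assumes "d \<ge> 2" "lk > 0" "b > 0"
  obtains K where "K > 0"
    and "\<And>l V Q D. lk < l \<Longrightarrow> l \<le> b * V \<Longrightarrow> (\<And>s t. s \<le> t \<Longrightarrow> Q t \<le> Q s) \<Longrightarrow>
      (\<And>y. y \<ge> 0 \<Longrightarrow> 0 \<le> Q (V / (1 - lk / l) + y)
        \<and> Q (V / (1 - lk / l) + y) \<le> D * exp (- (max 0 ((real d - 3) / 2) + 1) * y)) \<Longrightarrow>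
      \<bar>LBINT \<theta>=0..1 - lk / l. Q (V / \<theta>) * sphere_density d \<theta>\<bar> \<le> K * l powr (- ((real d - 1) / 2)) * D"
proof -
  define r where "r = (real d - 3) / 2"
  obtain C where C: "C > 0" and density: "\<And>l V x. l > 0 \<Longrightarrow> l \<le> b * V \<Longrightarrow> 0 < x \<Longrightarrow> x < 1 - lk / l \<Longrightarrow>
      sphere_density d x \<le> C * l powr (- r) * exp (max 0 r * (V * (1 - lk / l - x)))"
    using sphere_density_cap_bound[OF assms] unfolding r_def by auto
  show thesis
  proof (rule that[of "C * b"])
    show "C * b > 0" using C assms by simp
    fix l V D and Q :: "real \<Rightarrow> real"
    assume l: "lk < l" "l \<le> b * V" and Q_antimono: "\<And>s t. s \<le> t \<Longrightarrow> Q t \<le> Q s"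
      and Q_decay: "\<And>y. y \<ge> 0 \<Longrightarrow> 0 \<le> Q (V / (1 - lk / l) + y)
        \<and> Q (V / (1 - lk / l) + y) \<le> D * exp (- (max 0 ((real d - 3) / 2) + 1) * y)"
    have "l > 0" "V > 0" using l assms by (auto, smt (verit) mult_nonneg_nonpos)
    have "\<bar>LBINT \<theta>=0..1 - lk / l. Q (V / \<theta>) * sphere_density d \<theta>\<bar> \<le> C * l powr (- r) * D / V"
    proof (rule interval_integral_scaled_tail_le[OF _ _ \<open>V > 0\<close> _ Q_antimono])
      show "0 \<le> Q (V / (1 - lk / l) + y) \<and> Q (V / (1 - lk / l) + y) \<le> D * exp (- (max 0 r + 1) * y)"
        if "y \<ge> 0" for y using Q_decay[OF that] by (simp add: r_def)
      show "0 \<le> sphere_density d x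
          \<and> sphere_density d x \<le> C * l powr (- r) * exp ((max 0 r + 1 - 1) * (V * (1 - lk / l - x)))"
        if "x \<in> {0<..<1 - lk / l}" for x
        using density[OF \<open>l > 0\<close> l(2)] that sphere_density_nonneg[OF assms(1)] by simp
    qed (use l assms C in auto)
    also have "\<dots> \<le> C * l powr (- r) * D * b / l"
    proof -
      have "D \<ge> 0" using Q_decay[of 0] by simp
      moreover have "1 / V \<le> b / l" using l \<open>l > 0\<close> \<open>V > 0\<close> by (simp add: field_simps)
      ultimately show ?thesis using C by (simp add: divide_inverse mult_left_mono)
    qed
    also have "\<dots> = C * b * l powr (- ((real d - 1) / 2)) * D"
    proof -
      have "- ((real d - 1) / 2) = - r - 1" by (simp add: r_def field_simps)
      then have "l powr (- ((real d - 1) / 2)) = l powr (- r) / l" using \<open>l > 0\<close> by (simp add: powr_diff)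
      then show ?thesis by simp
    qed
    finally show "\<bar>LBINT \<theta>=0..1 - lk / l. Q (V / \<theta>) * sphere_density d \<theta>\<bar> \<le> C * b * l powr (- ((real d - 1) / 2)) * D" .
  qed
qed

section \<open>The logarithmic threshold\<close>

lemma tendsto_const_div_ln: "((\<lambda>u::real. c / ln u) \<longlongrightarrow> (0::real)) at_top"
  by (rule tendsto_divide_0[OF tendsto_const filterlim_at_top_imp_at_infinity[OF ln_at_top]])

lemma log_threshold_div_ln_tendsto:
  fixes a :: "real \<Rightarrow> real"
  assumes "(a \<longlongrightarrow> \<alpha>) at_top" "\<alpha> > 0" "\<delta> > 0" "lam > 0"
  shows "((\<lambda>u. ln (u / \<delta> / lam) / a u / ln u) \<longlongrightarrow> 1 / \<alpha>) at_top"
proof -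
  have "\<forall>\<^sub>F u in at_top. ln (u / \<delta> / lam) / a u / ln u = (1 - (ln \<delta> + ln lam) / ln u) / a u"
    using eventually_gt_at_top[of 1] by eventually_elim (use assms in \<open>simp add: ln_div ln_mult field_simps\<close>)
  moreover have "((\<lambda>u. (1 - (ln \<delta> + ln lam) / ln u) / a u) \<longlongrightarrow> (1 - 0) / \<alpha>) at_top"
    using assms by (intro tendsto_intros tendsto_const_div_ln) auto
  ultimately show ?thesis by (simp add: tendsto_cong)
qed

lemma log_threshold_gap_tendsto:
  fixes a :: "real \<Rightarrow> real"
  assumes "(a \<longlongrightarrow> \<alpha>) at_top" "\<alpha> > 0" "\<delta> > 0" "lam > 0" "k > 0"
  shows "((\<lambda>u. ln (u / \<delta> / lam) / a u / (1 - ln k / ln u) - ln (u / lam) / a u)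
    \<longlongrightarrow> ln (k / \<delta>) / \<alpha>) at_top"
proof -
  have "\<forall>\<^sub>F u in at_top. a u > 0"
    using order_tendstoD(1)[OF assms(1,2)] .
  moreover have "\<forall>\<^sub>F u in at_top. ln u > max 0 (ln k)"
    by (metis ln_at_top filterlim_at_top_dense)
  ultimately have "\<forall>\<^sub>F u in at_top. ln (u / \<delta> / lam) / a u / (1 - ln k / ln u) - ln (u / lam) / a u
      = (ln k - ln \<delta> - ln lam * (ln k / ln u)) / (a u * (1 - ln k / ln u))"
    using eventually_gt_at_top[of 0]
  proof eventually_elim
    case (elim u)
    then have "ln u - ln k \<noteq> 0" by simp
    with elim assms show ?case by (simp add: ln_div ln_mult field_simps)
  qed
  moreover have "((\<lambda>u. (ln k - ln \<delta> - ln lam * (ln k / ln u)) / (a u * (1 - ln k / ln u)))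
      \<longlongrightarrow> (ln k - ln \<delta> - ln lam * 0) / (\<alpha> * (1 - 0))) at_top"
    using assms by (intro tendsto_intros tendsto_const_div_ln) auto
  ultimately show ?thesis using assms by (simp add: tendsto_cong ln_div)
qed

lemma log_threshold_ge_ln:
  fixes a :: "real \<Rightarrow> real"
  assumes "(a \<longlongrightarrow> \<alpha>) at_top" "\<alpha> > 0" "\<delta> > 0" "lam > 0" "k > 1"
  shows "\<forall>\<^sub>F u in at_top. ln k < ln u \<and> ln u \<le> 2 * \<alpha> * (ln (u / \<delta> / lam) / a u)"
proof -
  have "1 / (2 * \<alpha>) < 1 / \<alpha>" using assms(2) by (simp add: field_simps)
  from order_tendstoD(1)[OF log_threshold_div_ln_tendsto[OF assms(1-4)] this]
  have "\<forall>\<^sub>F u in at_top. 1 / (2 * \<alpha>) < ln (u / \<delta> / lam) / a u / ln u" .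
  moreover have "\<forall>\<^sub>F u in at_top. ln k < ln u" by (metis ln_at_top filterlim_at_top_dense)
  ultimately show ?thesis
  proof eventually_elim
    case (elim u)
    define V where "V = ln (u / \<delta> / lam) / a u"
    have "ln u > 0" using elim(2) assms(5) by (smt (verit) ln_gt_zero)
    then show ?case using elim[folded V_def] assms(2) unfolding V_def[symmetric] by (simp add: field_simps)
  qed
qed

lemma log_threshold_at_top:
  fixes a :: "real \<Rightarrow> real"
  assumes "(a \<longlongrightarrow> \<alpha>) at_top" "\<alpha> > 0" "\<delta> > 0" "lam > 0"
  shows "filterlim (\<lambda>u. ln (u / \<delta> / lam) / a u) at_top at_top"
proof (rule filterlim_at_top_mono)
  show "LIM u at_top. 1 / (2 * \<alpha>) * ln u :> at_top"
    using assms(2) by (intro filterlim_tendsto_pos_mult_at_top[OF tendsto_const _ ln_at_top]) simp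
  have scale: "x \<le> 2 * \<alpha> * y \<Longrightarrow> 1 / (2 * \<alpha>) * x \<le> y" for x y
    using assms(2) by (simp add: field_simps)
  have "exp 1 > (1 :: real)" by simp
  from log_threshold_ge_ln[OF assms this]
  show "\<forall>\<^sub>F u in at_top. 1 / (2 * \<alpha>) * ln u \<le> ln (u / \<delta> / lam) / a u"
    by (rule eventually_mono) (blast intro: scale)
qed

lemma log_threshold_cap_at_top:
  fixes a :: "real \<Rightarrow> real"
  assumes "(a \<longlongrightarrow> \<alpha>) at_top" "\<alpha> > 0" "\<delta> > 0" "lam > 0" "k > 1"
  shows "filterlim (\<lambda>u. ln (u / \<delta> / lam) / a u / (1 - ln k / ln u)) at_top at_top"
proof (rule filterlim_at_top_mono[OF log_threshold_at_top[OF assms(1-4)]])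
  show "\<forall>\<^sub>F u in at_top. ln (u / \<delta> / lam) / a u \<le> ln (u / \<delta> / lam) / a u / (1 - ln k / ln u)"
    using log_threshold_ge_ln[OF assms]
  proof eventually_elim
    case (elim u)
    define V where "V = ln (u / \<delta> / lam) / a u"
    have "0 < ln k" using assms(5) by simp
    then have "0 < 1 - ln k / ln u" "1 - ln k / ln u \<le> 1" using elim by (auto simp: field_simps)
    moreover have "0 < 2 * \<alpha> * V" using elim[folded V_def] \<open>0 < ln k\<close> by linarith
    then have "0 \<le> V" using assms(2) by (simp add: zero_less_mult_iff)
    ultimately show ?case
      unfolding V_def[symmetric] using mult_left_le[of "1 - ln k / ln u" V] by (simp add: le_divide_eq)
  qed
qed

lemma log_threshold_root_at_top:
  fixes a :: "real \<Rightarrow> real"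
  assumes "(a \<longlongrightarrow> \<alpha>) at_top" "\<alpha> > 0" "lam > 0"
  shows "filterlim (\<lambda>u. (u / lam) powr (1 / a u)) at_top at_top"
proof (rule filterlim_at_top_mono[OF log_threshold_at_top[OF assms(1,2) zero_less_one assms(3)]])
  show "\<forall>\<^sub>F u in at_top. ln (u / 1 / lam) / a u \<le> (u / lam) powr (1 / a u)"
    using eventually_gt_at_top[of 0]
  proof eventually_elim
    case (elim u)
    have "ln (u / lam) / a u \<le> exp (ln (u / lam) / a u)" by (smt (verit) exp_ge_add_one_self)
    then show ?case using elim assms by (simp add: powr_def)
  qed
qed

lemma log_threshold_cap_gap:
  fixes a :: "real \<Rightarrow> real"
  assumes "(a \<longlongrightarrow> \<alpha>) at_top" "\<alpha> > 0" "\<delta> > 0" "lam > 0" "k > \<delta>"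
  shows "\<forall>\<^sub>F u in at_top.
    exp (ln (k / \<delta>) / (2 * \<alpha>)) * (u / lam) powr (1 / a u) \<le> exp (ln (u / \<delta> / lam) / a u / (1 - ln k / ln u))"
proof -
  have "ln (k / \<delta>) / (2 * \<alpha>) < ln (k / \<delta>) / \<alpha>" using assms by (simp add: field_simps)
  from order_tendstoD(1)[OF log_threshold_gap_tendsto[OF assms(1-4)] this]
  have "\<forall>\<^sub>F u in at_top. ln (k / \<delta>) / (2 * \<alpha>) + ln (u / lam) / a u \<le> ln (u / \<delta> / lam) / a u / (1 - ln k / ln u)"
    using assms by (auto elim: eventually_mono)
  then show ?thesis using eventually_gt_at_top[of 0]
    by eventually_elim (use assms(4) in \<open>simp add: powr_def mult.commute flip: exp_add\<close>)
qed

section \<open>Tails in the Gumbel domain of attraction\<close>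

lemma power_two_bracket:
  fixes y :: real
  assumes "y \<ge> 1"
  shows "\<exists>n. 2 ^ n \<le> y \<and> y < 2 * 2 ^ n"
proof -
  define n where "n = nat \<lfloor>log 2 y\<rfloor>"
  have "log 2 y \<ge> 0" using assms by simp
  then have "real n \<le> log 2 y" "log 2 y < real n + 1" unfolding n_def by linarith+
  then have "2 powr real n \<le> 2 powr log 2 y" "2 powr log 2 y < 2 powr (real n + 1)" by simp_all
  then show ?thesis using assms by (intro exI[of _ n]) (simp add: powr_add powr_realpow)
qed

locale gumbel_tail =
  fixes G e :: "real \<Rightarrow> real"
  assumes tail_antimono: "s \<le> t \<Longrightarrow> G t \<le> G s"
    and tail_pos: "G t > 0"
    and tail_ratio: "((\<lambda>t. G (t + x * e t) / G t) \<longlongrightarrow> exp (- x)) at_top"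
    and scale_pos: "\<forall>\<^sub>F t in at_top. e t > 0"
begin

lemma tail_nonzero [simp]: "G t \<noteq> 0"
  using tail_pos[of t] by simp

lemma tail_tendsto_zero: "(G \<longlongrightarrow> 0) at_top"
proof (rule order_tendstoI)
  fix \<epsilon> :: real assume "\<epsilon> > 0"
  have "\<exists>t0. G t0 < \<epsilon>"
  proof (rule ccontr)
    assume "\<nexists>t0. G t0 < \<epsilon>"
    then have ge: "G t \<ge> \<epsilon>" for t by (simp add: not_less)
    define g where "g = Inf (range G)"
    have bdd: "bdd_below (range G)" using tail_pos by (intro bdd_belowI2[of _ 0]) (auto intro: less_imp_le)
    have g_le: "g \<le> G t" for t unfolding g_def using bdd by (simp add: cInf_lower)
    have "g \<ge> \<epsilon>" unfolding g_def by (rule cINF_greatest) (use ge in auto)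
    with \<open>\<epsilon> > 0\<close> have "g < 2 * g" by simp
    then obtain t0 where t0: "G t0 < 2 * g" using cInf_lessD[of "range G" "2 * g"] unfolding g_def by auto
    have "exp (- 1) < (1 / 2 :: real)"
      using exp_less_mono[OF ln_2_less_1] by (simp add: exp_minus field_simps)
    from order_tendstoD(2)[OF tail_ratio[of 1] this]
    have "\<forall>\<^sub>F t in at_top. G (t + e t) / G t < 1 / 2" by simp
    moreover note scale_pos
    moreover have "\<forall>\<^sub>F t in at_top. t \<ge> t0" by (rule eventually_ge_at_top)
    ultimately obtain t where t: "G (t + e t) / G t < 1 / 2" "e t > 0" "t \<ge> t0"
      by (metis (mono_tags, lifting) eventually_happens' eventually_conj trivial_limit_at_top_linorder)
    have "G (t + e t) < G t / 2" using t(1) tail_pos[of t] by (simp add: field_simps)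
    also have "\<dots> \<le> G t0 / 2" using tail_antimono[OF t(3)] by simp
    also have "\<dots> < g" using t0 by simp
    finally show False using g_le[of "t + e t"] by simp
  qed
  then obtain t0 where t0: "G t0 < \<epsilon>" by blast
  show "\<forall>\<^sub>F t in at_top. G t < \<epsilon>"
    using eventually_ge_at_top[of t0] by (rule eventually_mono) (use t0 tail_antimono in fastforce)
next
  fix \<epsilon> :: real assume "\<epsilon> < 0"
  then show "\<forall>\<^sub>F t in at_top. \<epsilon> < G t" by (intro always_eventually allI less_trans[OF _ tail_pos])
qed

lemma scale_eventually_le:
  assumes "\<epsilon> > 0"
  shows "\<forall>\<^sub>F t in at_top. e t \<le> \<epsilon> * t"
proof -
  \<comment> \<open>The ratio condition at x = -1/\<epsilon>: if e(t) > \<epsilon> t, the shifted point is negative, so the ratio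
    is at least G(0)/G(t), which tends to infinity.\<close>
  define M where "M = exp (1 / \<epsilon>) + 1"
  have M: "M > 0" by (simp add: M_def add_pos_pos)
  have "exp (- (- 1 / \<epsilon>)) < M" by (simp add: M_def)
  from order_tendstoD(2)[OF tail_ratio this]
  have "\<forall>\<^sub>F t in at_top. G (t + (- 1 / \<epsilon>) * e t) / G t < M" .
  moreover have "\<forall>\<^sub>F t in at_top. G t < G 0 / M"
    using order_tendstoD(2)[OF tail_tendsto_zero] tail_pos M by simp
  ultimately show ?thesis
  proof eventually_elim
    case (elim t)
    show "e t \<le> \<epsilon> * t"
    proof (rule ccontr)
      assume "\<not> e t \<le> \<epsilon> * t"
      then have "t + (- 1 / \<epsilon>) * e t \<le> 0" using assms by (simp add: field_simps)
      then have "G 0 / G t \<le> G (t + (- 1 / \<epsilon>) * e t) / G t"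
        using tail_pos by (intro divide_right_mono tail_antimono) (auto intro: less_imp_le)
      moreover have "M < G 0 / G t" using elim(2) tail_pos[of t] M by (simp add: field_simps)
      ultimately show False using elim(1) by linarith
    qed
  qed
qed

lemma scale_shift_le:
  assumes "x \<ge> 0" "\<delta> > 0"
  shows "\<forall>\<^sub>F t in at_top. e (t + x * e t) \<le> (1 + \<delta>) * e t"
proof -
  define A where "A = exp (- 1 - \<delta> / 2)"
  have "A < exp (- 1)" using assms by (simp add: A_def)
  from order_tendstoD(1)[OF tail_ratio[of 1] this]
  obtain S where S: "\<And>s. s \<ge> S \<Longrightarrow> A < G (s + e s) / G s"
    by (auto simp: eventually_at_top_linorder)
  have "((\<lambda>t. (G (t + (x + 1 + \<delta>) * e t) / G t) / (G (t + x * e t) / G t))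
          \<longlongrightarrow> exp (- (x + 1 + \<delta>)) / exp (- x)) at_top"
    by (intro tendsto_divide tail_ratio) simp
  moreover have "exp (- (x + 1 + \<delta>)) / exp (- x) < A"
    using assms by (simp add: A_def flip: exp_diff)
  ultimately have "\<forall>\<^sub>F t in at_top. G (t + (x + 1 + \<delta>) * e t) / G (t + x * e t) < A"
    by (rule order_tendstoD(2)[THEN eventually_mono]) simp
  then show ?thesis using scale_pos eventually_ge_at_top[of S]
  proof eventually_elim
    case (elim t)
    define s where "s = t + x * e t"
    have "s \<ge> S" unfolding s_def using elim(2,3) assms(1) mult_nonneg_nonneg[of x "e t"] by linarith
    show ?case
    proof (rule ccontr)
      assume "\<not> ?case"
      then have "t + (x + 1 + \<delta>) * e t \<le> s + e s" by (simp add: s_def algebra_simps)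
      then have "G (s + e s) \<le> G (t + (x + 1 + \<delta>) * e t)" by (rule tail_antimono)
      moreover have "G (t + (x + 1 + \<delta>) * e t) < A * G s"
        using elim(1) tail_pos[of s] by (simp add: s_def field_simps)
      moreover have "A * G s < G (s + e s)" using S[OF \<open>s \<ge> S\<close>] tail_pos[of s] by (simp add: field_simps)
      ultimately show False by linarith
    qed
  qed
qed

lemma tail_drop_doubling:
  assumes "x > 0" "\<rho> > exp (- x)"
  shows "\<forall>\<^sub>F t in at_top. \<forall>n. G (t + 2 ^ n * x * e t) \<le> \<rho> ^ n * G t"
proof -
  have \<rho>: "\<rho> > 0" using assms(2) by (smt (verit) exp_gt_zero)
  have "\<forall>\<^sub>F s in at_top. e s > 0 \<and> G (s + x * e s) / G s < \<rho> \<and> e (s + x * e s) \<le> 2 * e s"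
    using scale_pos order_tendstoD(2)[OF tail_ratio assms(2)] scale_shift_le[OF less_imp_le[OF assms(1)] zero_less_one]
    by eventually_elim simp
  then obtain T where T: "\<And>s. s \<ge> T \<Longrightarrow>
      e s > 0 \<and> G (s + x * e s) < \<rho> * G s \<and> e (s + x * e s) \<le> 2 * e s"
    using tail_pos by (auto simp: eventually_at_top_linorder field_simps)
  show ?thesis
  proof (rule eventually_at_top_linorderI[of T], intro allI)
    fix t n assume t: "t \<ge> T"
    define c where "c n = ((\<lambda>s. s + x * e s) ^^ n) t" for n
    have chain: "t \<le> c n \<and> e (c n) \<le> 2 ^ n * e t \<and> c n \<le> t + (2 ^ n - 1) * x * e t \<and> G (c n) \<le> \<rho> ^ n * G t"
      for n
    proof (induction n)
      case 0
      show ?case by (simp add: c_def)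
    next
      case (Suc n)
      have c: "c (Suc n) = c n + x * e (c n)" by (simp add: c_def)
      have Tn: "x * e (c n) > 0" "G (c (Suc n)) < \<rho> * G (c n)" "e (c (Suc n)) \<le> 2 * e (c n)"
        using T[of "c n"] Suc t c assms(1) by auto
      have "x * e (c n) \<le> x * (2 ^ n * e t)" using Suc assms(1) by (intro mult_left_mono) auto
      then have "c (Suc n) \<le> t + (2 ^ Suc n - 1) * x * e t" using Suc c by (simp add: algebra_simps)
      moreover have "G (c (Suc n)) \<le> \<rho> ^ Suc n * G t"
      proof -
        have "\<rho> * G (c n) \<le> \<rho> * (\<rho> ^ n * G t)" using Suc \<rho> by (intro mult_left_mono) auto
        then show ?thesis using Tn(2) by (simp add: mult.assoc)
      qed
      ultimately show ?case using Suc Tn assms(1) c by (auto intro: less_imp_le)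
    qed
    have "x * e t \<ge> 0" using T[OF t] assms(1) by simp
    then have "c n \<le> t + 2 ^ n * x * e t" using chain[of n] by (auto simp: algebra_simps)
    then show "G (t + 2 ^ n * x * e t) \<le> \<rho> ^ n * G t"
      using chain[of n] tail_antimono by (meson order.trans)
  qed
qed

lemma tail_shift_le_scale_powr:
  assumes "q > 1" "x > 0"
  shows "\<forall>\<^sub>F t in at_top. G (q * t) \<le> (2 * x / (q - 1)) powr x * (e t / t) powr x * G t"
proof -
  have "exp (- x) < 2 powr (- x)"
    using assms(2) ln_2_less_1 by (simp add: powr_def)
  have "(q - 1) / x > 0" using assms by simp
  show ?thesis
    using eventually_gt_at_top[of 0] scale_pos scale_eventually_le[OF \<open>(q - 1) / x > 0\<close>]
      tail_drop_doubling[OF assms(2) \<open>exp (- x) < 2 powr (- x)\<close>]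
  proof eventually_elim
    case (elim t)
    define y where "y = (q - 1) * t / (x * e t)"
    have "y \<ge> 1" using elim assms by (simp add: y_def field_simps)
    then obtain n where n: "2 ^ n \<le> y" "y < 2 * 2 ^ n" using power_two_bracket by blast
    have "t + 2 ^ n * x * e t \<le> t + y * x * e t" using n elim assms by (simp add: mult_right_mono)
    also have "\<dots> = q * t" using elim assms by (simp add: y_def field_simps)
    finally have "G (q * t) \<le> G (t + 2 ^ n * x * e t)" by (rule tail_antimono)
    also have "\<dots> \<le> (2 powr (- x)) ^ n * G t" using elim by blast
    also have "\<dots> \<le> ((2 * x / (q - 1)) powr x * (e t / t) powr x) * G t"
    proof (rule mult_right_mono)
      have "(2 powr (- x)) ^ n = (2 ^ n) powr (- x)"
        by (simp add: powr_powr mult.commute flip: powr_realpow)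
      also have "\<dots> \<le> (y / 2) powr (- x)"
        using n assms \<open>y \<ge> 1\<close> by (intro powr_mono2') auto
      also have "\<dots> = (2 / y) powr x"
        using \<open>y \<ge> 1\<close> by (simp add: powr_minus_divide powr_divide)
      also have "2 / y = 2 * x / (q - 1) * (e t / t)"
        using elim assms by (simp add: y_def field_simps)
      also have "(2 * x / (q - 1) * (e t / t)) powr x = (2 * x / (q - 1)) powr x * (e t / t) powr x"
        by (rule powr_mult)
      finally show "(2 powr (- x)) ^ n \<le> (2 * x / (q - 1)) powr x * (e t / t) powr x" .
    qed (use tail_pos[of t] in simp)
    finally show ?case .
  qed
qed

lemma tail_shift_smallo:
  assumes "q > 1" "p > 0"
  shows "(\<lambda>t. G (q * t)) \<in> o(\<lambda>t. (e t / t) powr p * G t)"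
proof (rule landau_o.smallI)
  fix c :: real assume c: "c > 0"
  define C where "C = (2 * (p + 1) / (q - 1)) powr (p + 1)"
  have C: "C > 0" using assms by (simp add: C_def)
  have "c / C > 0" "p + 1 > 0" using c C assms by simp_all
  show "\<forall>\<^sub>F t in at_top. norm (G (q * t)) \<le> c * norm ((e t / t) powr p * G t)"
    using eventually_gt_at_top[of 0] scale_pos scale_eventually_le[OF \<open>c / C > 0\<close>]
      tail_shift_le_scale_powr[OF assms(1) \<open>p + 1 > 0\<close>]
  proof eventually_elim
    case (elim t)
    have "e t / t > 0" using elim by simp
    then have "(e t / t) powr (p + 1) = e t / t * (e t / t) powr p"
      using elim(1,2) by (simp add: powr_add)
    then have "G (q * t) \<le> C * (e t / t) * ((e t / t) powr p * G t)"
      using elim(4) unfolding C_def[symmetric] by (simp add: mult_ac)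
    also have "\<dots> \<le> c * ((e t / t) powr p * G t)"
      using elim C tail_pos[of t] by (intro mult_right_mono) (simp_all add: field_simps)
    finally show ?case using tail_pos[of "q * t"] tail_pos[of t] by (simp add: abs_mult)
  qed
qed

lemma tail_rapidly_varying:
  assumes "\<rho> > 0"
  shows "\<forall>\<^sub>F t in at_top. G (exp 1 * t) \<le> \<rho> * G t"
proof -
  have "exp 1 > (1 :: real)" by simp
  show ?thesis
    using landau_o.smallD[OF tail_shift_smallo[OF \<open>exp 1 > 1\<close> zero_less_one] assms]
      scale_eventually_le[OF zero_less_one] scale_pos eventually_gt_at_top[of 0]
  proof eventually_elim
    case (elim t)
    have "G (exp 1 * t) \<le> \<rho> * (e t / t * G t)"
      using elim tail_pos[of t] tail_pos[of "exp 1 * t"] by (simp add: abs_mult)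
    also have "\<dots> \<le> \<rho> * G t"
      using elim tail_pos[of t] assms by (intro mult_left_mono mult_left_le_one_le) (auto simp: field_simps)
    finally show ?case .
  qed
qed

lemma tail_exp_scale_decay:
  assumes "\<kappa> > 0"
  shows "\<forall>\<^sub>F s in at_top. \<forall>y \<ge> 0. G (exp (s + y)) \<le> exp (\<kappa> * (1 - y)) * G (exp s)"
proof -
  obtain T where T: "\<And>t. t \<ge> T \<Longrightarrow> G (exp 1 * t) \<le> exp (- \<kappa>) * G t"
    using tail_rapidly_varying[OF exp_gt_zero] by (auto simp: eventually_at_top_linorder)
  have geometric: "G (exp (s + real j)) \<le> exp (- \<kappa> * j) * G (exp s)" if "exp s \<ge> T" for s j
  proof (induction j)
    case (Suc j)
    have "exp (s + real j) \<ge> T" using that by (smt (verit) exp_le_cancel_iff of_nat_0_le_iff)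
    moreover have "exp (s + real (Suc j)) = exp 1 * exp (s + real j)"
      by (simp add: add.commute flip: exp_add)
    ultimately have "G (exp (s + real (Suc j))) \<le> exp (- \<kappa>) * G (exp (s + real j))"
      using T by simp
    also have "\<dots> \<le> exp (- \<kappa>) * (exp (- \<kappa> * j) * G (exp s))"
      using Suc by (intro mult_left_mono) auto
    finally show ?case by (simp add: mult.assoc algebra_simps flip: exp_add)
  qed simp
  have "\<forall>\<^sub>F s in at_top. T \<le> exp s" using exp_at_top by (simp add: filterlim_at_top)
  then show ?thesis
  proof (rule eventually_mono, intro allI impI)
    fix s y :: real assume s: "T \<le> exp s" and y: "y \<ge> 0"
    define j where "j = nat \<lfloor>y\<rfloor>"
    have j: "real j \<le> y" "y < real j + 1" using y unfolding j_def by linarith+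
    have "G (exp (s + y)) \<le> G (exp (s + real j))" using j by (intro tail_antimono) simp
    also have "\<dots> \<le> exp (- \<kappa> * j) * G (exp s)" by (rule geometric[OF s])
    also have "\<dots> \<le> exp (\<kappa> * (1 - y)) * G (exp s)"
    proof -
      have "\<kappa> * y \<le> \<kappa> * (real j + 1)" using j assms by (intro mult_left_mono) auto
      then show ?thesis using tail_pos[of "exp s"] by (intro mult_right_mono) (auto simp: algebra_simps)
    qed
    finally show "G (exp (s + y)) \<le> exp (\<kappa> * (1 - y)) * G (exp s)" .
  qed
qed

lemma sphere_cap_integral_bigo:
  fixes l V :: "'b \<Rightarrow> real"
  assumes "d \<ge> 2" "lk > 0" "b > 0"
    and l_V: "\<forall>\<^sub>F u in F. lk < l u \<and> l u \<le> b * V u"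
    and V_tm: "filterlim (\<lambda>u. V u / (1 - lk / l u)) at_top F"
  shows "(\<lambda>u. LBINT \<theta>=0..1 - lk / l u. G (exp (V u / \<theta>)) * sphere_density d \<theta>)
    \<in> O[F](\<lambda>u. l u powr (- ((real d - 1) / 2)) * G (exp (V u / (1 - lk / l u))))"
proof -
  define \<kappa> where "\<kappa> = max 0 ((real d - 3) / 2) + 1"
  have "\<kappa> > 0" by (simp add: \<kappa>_def)
  obtain K where K: "K > 0" and bound: "\<And>l V Q D. lk < l \<Longrightarrow> l \<le> b * V \<Longrightarrow> (\<And>s t. s \<le> t \<Longrightarrow> Q t \<le> Q s) \<Longrightarrow>
      (\<And>y. y \<ge> 0 \<Longrightarrow> 0 \<le> Q (V / (1 - lk / l) + y) \<and> Q (V / (1 - lk / l) + y) \<le> D * exp (- \<kappa> * y)) \<Longrightarrow>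
      \<bar>LBINT \<theta>=0..1 - lk / l. Q (V / \<theta>) * sphere_density d \<theta>\<bar> \<le> K * l powr (- ((real d - 1) / 2)) * D"
    using sphere_cap_integral_le[OF assms(1-3)] unfolding \<kappa>_def by blast
  show ?thesis
  proof (rule landau_o.bigI)
    show "K * exp \<kappa> > 0" using K by simp
    show "\<forall>\<^sub>F u in F. norm (LBINT \<theta>=0..1 - lk / l u. G (exp (V u / \<theta>)) * sphere_density d \<theta>)
        \<le> K * exp \<kappa> * norm (l u powr (- ((real d - 1) / 2)) * G (exp (V u / (1 - lk / l u))))"
      using l_V eventually_compose_filterlim[OF tail_exp_scale_decay[OF \<open>\<kappa> > 0\<close>] V_tm]
    proof eventually_elim
      case (elim u)
      define s where "s = V u / (1 - lk / l u)"
      have "\<bar>LBINT \<theta>=0..1 - lk / l u. G (exp (V u / \<theta>)) * sphere_density d \<theta>\<bar>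
          \<le> K * l u powr (- ((real d - 1) / 2)) * (exp \<kappa> * G (exp s))"
      proof (rule bound[where Q = "\<lambda>s. G (exp s)"])
        show "0 \<le> G (exp (V u / (1 - lk / l u) + y))
            \<and> G (exp (V u / (1 - lk / l u) + y)) \<le> exp \<kappa> * G (exp s) * exp (- \<kappa> * y)" if "y \<ge> 0" for y
        proof -
          have "G (exp (s + y)) \<le> exp (\<kappa> * (1 - y)) * G (exp s)"
            using elim(2) that unfolding s_def by blast
          also have "\<dots> = exp \<kappa> * G (exp s) * exp (- \<kappa> * y)"
            by (simp add: algebra_simps flip: exp_add)
          finally show ?thesis using tail_pos[of "exp (s + y)"] unfolding s_def by simp
        qed
      qed (use elim tail_antimono in auto)
      then show ?case using tail_pos[of "exp s"] by (simp add: s_def abs_mult mult_ac)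
    qed
  qed
qed

lemma tail_shift_rescaled_smallo:
  fixes w a l :: "'b \<Rightarrow> real"
  assumes w: "filterlim w at_top F" and "q > 1" "p > 0" "\<alpha> > 0"
    and a_l: "\<forall>\<^sub>F x in F. \<alpha> \<le> a x \<and> 0 < l x"
  shows "(\<lambda>x. l x powr (- p) * G (q * w x))
    \<in> o[F](\<lambda>x. (a x * e (w x) / (w x * l x)) powr p * G (w x))"
proof (rule landau_o.smallI)
  fix c :: real assume c: "c > 0"
  have "c * \<alpha> powr p > 0" using c assms by simp
  from landau_o.smallD[OF landau_o.small.compose[OF tail_shift_smallo[OF assms(2,3)] w] this]
  show "\<forall>\<^sub>F x in F. norm (l x powr (- p) * G (q * w x))
      \<le> c * norm ((a x * e (w x) / (w x * l x)) powr p * G (w x))"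
    using a_l eventually_compose_filterlim[OF scale_pos w] eventually_compose_filterlim[OF eventually_gt_at_top[of 0] w]
  proof eventually_elim
    case (elim x)
    have "l x powr (- p) * G (q * w x)
        \<le> l x powr (- p) * (c * \<alpha> powr p * ((e (w x) / w x) powr p * G (w x)))"
      using elim tail_pos[of "q * w x"] tail_pos[of "w x"] by (intro mult_left_mono) (auto simp: abs_mult)
    also have "\<dots> \<le> c * (a x powr p * ((e (w x) / w x) powr p * l x powr (- p)) * G (w x))"
    proof -
      have "\<alpha> powr p \<le> a x powr p" using elim assms by (intro powr_mono2) auto
      then show ?thesis using c tail_pos[of "w x"]
        by (simp add: mult_ac mult_right_mono mult_left_mono)
    qed
    also have "a x powr p * ((e (w x) / w x) powr p * l x powr (- p)) = (a x * e (w x) / (w x * l x)) powr p"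
      using elim by (simp add: powr_mult powr_divide powr_minus_divide)
    finally show ?case using tail_pos[of "q * w x"] tail_pos[of "w x"] elim by (simp add: abs_mult mult_ac)
  qed
qed

lemma sphere_cap_tail_integral_smallo:
  fixes a :: "real \<Rightarrow> real"
  assumes d: "d \<ge> 2" and lam: "lam > 0" and k: "k > real d"
    and a: "(a \<longlongrightarrow> \<alpha>) at_top" and \<alpha>: "\<alpha> > 0"
  shows "(\<lambda>u. LBINT \<theta>=0..1 - ln k / ln u. G (exp (ln (u / real d / lam) / a u / \<theta>)) * sphere_density d \<theta>)
    \<in> o[at_top](\<lambda>u. (a u * e ((u / lam) powr (1 / a u)) / ((u / lam) powr (1 / a u) * ln u))
        powr ((real d - 1) / 2) * G ((u / lam) powr (1 / a u)))"
proof -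
  define V where "V u = ln (u / real d / lam) / a u" for u
  define w where "w u = (u / lam) powr (1 / a u)" for u
  define p where "p = (real d - 1) / 2"
  define q where "q = exp (ln (k / real d) / (2 * \<alpha>))"
  have pos: "real d > 0" "k > 1" "ln k > 0" "p > 0" "q > 1" "\<alpha> / 2 > 0" "2 * \<alpha> > 0"
    using d k \<alpha> by (auto simp: p_def q_def)
  have "(\<lambda>u. LBINT \<theta>=0..1 - ln k / ln u. G (exp (V u / \<theta>)) * sphere_density d \<theta>)
      \<in> O(\<lambda>u. ln u powr (- p) * G (exp (V u / (1 - ln k / ln u))))"
    using sphere_cap_integral_bigo[OF d pos(3,7) log_threshold_ge_ln[OF a \<alpha> pos(1) lam pos(2)]
        log_threshold_cap_at_top[OF a \<alpha> pos(1) lam pos(2)]]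
    unfolding V_def p_def .
  also have "(\<lambda>u. ln u powr (- p) * G (exp (V u / (1 - ln k / ln u)))) \<in> O(\<lambda>u. ln u powr (- p) * G (q * w u))"
  proof (rule landau_o.bigI[OF zero_less_one])
    show "\<forall>\<^sub>F u in at_top. norm (ln u powr (- p) * G (exp (V u / (1 - ln k / ln u))))
        \<le> 1 * norm (ln u powr (- p) * G (q * w u))"
      using log_threshold_cap_gap[OF a \<alpha> pos(1) lam k]
    proof eventually_elim
      case (elim u)
      then have "G (exp (V u / (1 - ln k / ln u))) \<le> G (q * w u)"
        unfolding V_def w_def q_def by (rule tail_antimono)
      then show ?case
        using tail_pos[of "exp (V u / (1 - ln k / ln u))"] tail_pos[of "q * w u"]
        by (simp add: abs_mult mult_left_mono)
    qed
  qed
  also have "(\<lambda>u. ln u powr (- p) * G (q * w u)) \<in> o(\<lambda>u. (a u * e (w u) / (w u * ln u)) powr p * G (w u))"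
  proof (rule tail_shift_rescaled_smallo[OF _ pos(5,4,6)])
    show "filterlim w at_top at_top"
      unfolding w_def by (rule log_threshold_root_at_top[OF a \<alpha> lam])
    have "\<alpha> / 2 < \<alpha>" using \<alpha> by simp
    from order_tendstoD(1)[OF a this] eventually_gt_at_top[of 1]
    show "\<forall>\<^sub>F u in at_top. \<alpha> / 2 \<le> a u \<and> 0 < ln u" by eventually_elim auto
  qed
  finally show ?thesis unfolding V_def w_def p_def .
qed

end

lemma (in prob_space) gumbel_tail_exp_tail:
  assumes "R \<in> borel_measurable M"
    and "\<And>t. measure M {\<omega> \<in> space M. exp (R \<omega>) > t} > 0"
    and "\<forall>\<^sub>F t in at_top. e t > 0"
    and "\<And>x. ((\<lambda>t. measure M {\<omega> \<in> space M. exp (R \<omega>) > t + x * e t}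
                 / measure M {\<omega> \<in> space M. exp (R \<omega>) > t}) \<longlongrightarrow> exp (- x)) at_top"
  shows "gumbel_tail (\<lambda>t. measure M {\<omega> \<in> space M. exp (R \<omega>) > t}) e"
proof
  fix s t :: real assume "s \<le> t"
  then show "measure M {\<omega> \<in> space M. exp (R \<omega>) > t} \<le> measure M {\<omega> \<in> space M. exp (R \<omega>) > s}"
    using assms(1) by (intro finite_measure_mono) auto
qed (use assms in auto)

lemma measure_scaled_exp_gt:
  fixes R :: "'a \<Rightarrow> real"
  assumes "lam > 0" "c > 0" "b > 0"
  shows "measure M {\<omega> \<in> space M. lam * exp (R \<omega> * b) > c}
    = measure M {\<omega> \<in> space M. exp (R \<omega>) > exp (ln (c / lam) / b)}"
proof -
  have "lam * exp (z * b) > c \<longleftrightarrow> exp z > exp (ln (c / lam) / b)" for z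
  proof -
    have "lam * exp (z * b) > c \<longleftrightarrow> exp (z * b) > exp (ln (c / lam))"
      using assms by (simp add: pos_divide_less_eq mult.commute)
    also have "\<dots> \<longleftrightarrow> z * b > ln (c / lam)" by (rule exp_less_cancel_iff)
    also have "\<dots> \<longleftrightarrow> z > ln (c / lam) / b" using assms by (simp add: pos_divide_less_eq)
    finally show ?thesis by simp
  qed
  then show ?thesis by simp
qed

lemma measure_scaled_exp_gt_powr:
  fixes R :: "'a \<Rightarrow> real"
  assumes "lam > 0" "c > 0" "beta > 0" "g > 0"
  shows "measure M {\<omega> \<in> space M. lam * exp (R \<omega> * beta * g) > c}
    = measure M {\<omega> \<in> space M. exp (R \<omega>) > (c / lam) powr (1 / (beta * g))}"
  using measure_scaled_exp_gt[of lam c "beta * g" M R] assms by (simp add: powr_def mult.assoc)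

lemma estar_tail_measure_eq:
  fixes R :: "'a \<Rightarrow> real"
  assumes "u > 0" "lam > 0" "beta > 0" "gam u > 0"
  shows "(estar lam beta gam e u / (u * ln u)) powr p * measure M {\<omega> \<in> space M. lam * exp (R \<omega> * beta * gam u) > u}
    = (beta * gam u * e ((u / lam) powr (1 / (beta * gam u))) / ((u / lam) powr (1 / (beta * gam u)) * ln u)) powr p
        * measure M {\<omega> \<in> space M. exp (R \<omega>) > (u / lam) powr (1 / (beta * gam u))}"
proof -
  have "estar lam beta gam e u / (u * ln u)
      = beta * gam u * e ((u / lam) powr (1 / (beta * gam u))) / ((u / lam) powr (1 / (beta * gam u)) * ln u)"
    using assms(1) by (simp add: estar_def wfun_def)
  then show ?thesis using assms by (simp add: measure_scaled_exp_gt_powr)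
qed

lemma cap_integral_measure_eq:
  fixes R :: "'a \<Rightarrow> real" and tm :: ereal
  assumes "lam > 0" "c > 0" "beta > 0" "g > 0" "tm \<ge> 0"
  shows "(LBINT \<theta>=0..tm. measure M {\<omega> \<in> space M. lam * exp (R \<omega> * \<theta> * beta * g) > c} * f \<theta>)
    = (LBINT \<theta>=0..tm. measure M {\<omega> \<in> space M. exp (R \<omega>) > exp (ln (c / lam) / (beta * g) / \<theta>)} * f \<theta>)"
proof (rule interval_lebesgue_integral_cong)
  fix \<theta> assume "\<theta> \<in> einterval 0 tm"
  then have "\<theta> > 0" by (simp add: einterval_def zero_ereal_def)
  have assoc: "R \<omega> * \<theta> * beta * g = R \<omega> * (\<theta> * (beta * g))" for \<omega> by (simp add: mult_ac)
  have divide: "ln (c / lam) / (beta * g) / \<theta> = ln (c / lam) / (\<theta> * (beta * g))" by (simp add: mult.commute)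
  have "\<theta> * (beta * g) > 0" using assms \<open>\<theta> > 0\<close> by simp
  then show "measure M {\<omega> \<in> space M. lam * exp (R \<omega> * \<theta> * beta * g) > c} * f \<theta>
      = measure M {\<omega> \<in> space M. exp (R \<omega>) > exp (ln (c / lam) / (beta * g) / \<theta>)} * f \<theta>"
    unfolding assoc divide by (simp only: measure_scaled_exp_gt[OF assms(1,2)])
qed (use assms in simp_all)

theorem mainTheorem6:
  fixes M :: "'a measure" and R :: "'a \<Rightarrow> real" and e :: "real \<Rightarrow> real"
    and lam beta \<gamma> k :: real and gam :: "real \<Rightarrow> real" and d :: nat
  assumes "prob_space M"
    and "R \<in> borel_measurable M"
    and "\<forall>\<omega>\<in>space M. R \<omega> > 0"
    and "\<forall>t. measure M {\<omega> \<in> space M. exp (R \<omega>) > t} > 0"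
    and "\<forall>\<^sub>F t in at_top. e t > 0"
    and "\<forall>x::real. ((\<lambda>t. measure M {\<omega> \<in> space M. exp (R \<omega>) > t + x * e t}
                        / measure M {\<omega> \<in> space M. exp (R \<omega>) > t}) \<longlongrightarrow> exp (- x)) at_top"
    and "d \<ge> 2"
    and "lam > 0" and "beta > 0"
    and "\<forall>u. gam u > 0" and "(gam \<longlongrightarrow> \<gamma>) at_top" and "\<gamma> > 0"
    and "k > real d"
  shows "(\<lambda>u. LBINT \<theta>=0..(1 - ln k / ln u).
            measure M {\<omega> \<in> space M. lam * exp (R \<omega> * \<theta> * beta * gam u) > u / real d}
            * sphere_density d \<theta>)
         \<in> o[at_top](\<lambda>u. (estar lam beta gam e u / (u * ln u)) powr ((real d - 1) / 2)
            * measure M {\<omega> \<in> space M. lam * exp (R \<omega> * beta * gam u) > u})"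
proof -
  define G where "G t = measure M {\<omega> \<in> space M. exp (R \<omega>) > t}" for t
  interpret gumbel_tail G e
    unfolding G_def using assms(2,4-6) by (intro prob_space.gumbel_tail_exp_tail[OF assms(1)]) auto
  have "((\<lambda>u. beta * gam u) \<longlongrightarrow> beta * \<gamma>) at_top" by (intro tendsto_intros assms(11))
  note core = sphere_cap_tail_integral_smallo[OF assms(7,8,13) this mult_pos_pos[OF assms(9,12)]]
  have "ln k > 0" using assms(7,13) by simp
  have "\<forall>\<^sub>F u in at_top.
      (LBINT \<theta>=0..1 - ln k / ln u. G (exp (ln (u / real d / lam) / (beta * gam u) / \<theta>)) * sphere_density d \<theta>)
    = (LBINT \<theta>=0..1 - ln k / ln u.
        measure M {\<omega> \<in> space M. lam * exp (R \<omega> * \<theta> * beta * gam u) > u / real d} * sphere_density d \<theta>)"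
    using eventually_gt_at_top[of k] unfolding G_def
    by eventually_elim (rule cap_integral_measure_eq[symmetric], use assms(7-10,13) \<open>ln k > 0\<close> in auto)
  moreover have "\<forall>\<^sub>F u in at_top.
      (estar lam beta gam e u / (u * ln u)) powr ((real d - 1) / 2)
        * measure M {\<omega> \<in> space M. lam * exp (R \<omega> * beta * gam u) > u}
    = (beta * gam u * e ((u / lam) powr (1 / (beta * gam u)))
          / ((u / lam) powr (1 / (beta * gam u)) * ln u)) powr ((real d - 1) / 2)
        * G ((u / lam) powr (1 / (beta * gam u)))"
    using eventually_gt_at_top[of 0] unfolding G_def
    by eventually_elim (rule estar_tail_measure_eq, use assms(8-10) in auto)
  ultimately show ?thesis
    using core by (simp only: landau_o.small.in_cong landau_o.small.cong)
qed
end
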